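(* Let $m\le n$, $K\in\{0,\ldots,m-1\}$, $\gamma>0$, $\mathcal{C}\subset\mathrm{dom} f\subset\mathbb{R}^{m\times n}$ satisfy condition (C1), and suppose $f+\delta_{\mathcal C}$ is directionally differentiable and Lipschitz continuous on its domain $\mathcal C$ with constant $M$ with respect to the nuclear norm. Then every d-stationary point $X^*$ of $\min_X f(X)+\gamma\mathcal{T}_K(X)+\delta_{\mathcal C}(X)$ satisfies $\mathcal{T}_K(X^* )=0$ provided $\gamma>M$.
   Context: $\mathcal{T}_K(X)=\sum_{i=K+1}^{\min\{m,n\}}\sigma_i(X)$ (singular values in decreasing order); nuclear norm $\|X\|_*=\sum_i\sigma_i(X)$. $\delta_{\mathcal C}$ = indicator of $\mathcal C$. Feasible cone $\mathcal{F}(X;\mathcal{C})=\{D\mid \exists\varsigma'>0:\ X+\varsigma D\in\mathcal{C}\ \forall\varsigma\in(0,\varsigma')\}$. Directional differentiability: $h'(X;D)=\lim_{\varsigma\searrow0}(h(X+\varsigma D)-h(X))/\varsigma$ exists in $\mathbb R$ for $X\in\mathrm{dom}\,h$, $D\in\mathcal F(X;\mathrm{dom}\,h)$. Condition (C1): every $X\in\mathcal C$ has an SVD $X=U[\mathrm{diag}(\sigma_1(X),\ldots,\sigma_m(X)),0]V^\top$ with $-U[\mathrm{diag}(0,\ldots,0,\sigma_{K+1}(X),\ldots,\sigma_m(X)),0]V^\top\in\mathcal{F}(X;\mathcal C)$. $X^*$ is d-stationary if the objective's directional derivative at $X^*$ is $\ge0$ for all $D\in\mathcal F(X^*;\mathcal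 C)$. *)

theory Defs
  imports "HOL-Analysis.Analysis" "Jordan_Normal_Form.Matrix"
begin

text \<open>Real m x n matrices are JNF matrices of type real mat in carrier_mat m n.
  Indices are 0-based: the paper's sigma_i corresponds to svals X ! (i-1).\<close>

definition orth_mat :: "nat \<Rightarrow> real mat \<Rightarrow> bool" where
  "orth_mat k U \<longleftrightarrow> U \<in> carrier_mat k k \<and> transpose_mat U * U = 1\<^sub>m k"

definition rect_diag :: "nat \<Rightarrow> nat \<Rightarrow> real list \<Rightarrow> real mat" where
  "rect_diag m n s = mat m n (\<lambda>(i,j). if i = j \<and> i < length s then s ! i else 0)"

definition is_svd :: "real mat \<Rightarrow> real mat \<Rightarrow> real list \<Rightarrow> real mat \<Rightarrow> bool" where
  "is_svd X U s V \<longleftrightarrow>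
     (let m = dim_row X; n = dim_col X in
        orth_mat m U \<and> orth_mat n V \<and> length s = min m n \<and>
        (\<forall>i < length s. 0 \<le> s ! i) \<and> sorted_wrt (\<ge>) s \<and>
        X = U * rect_diag m n s * transpose_mat V)"

text \<open>Singular values sigma_1(X) \<ge> ... \<ge> sigma_{min m n}(X) (unique by SVD theory).\<close>
definition svals :: "real mat \<Rightarrow> real list" where
  "svals X = (THE s. \<exists>U V. is_svd X U s V)"

definition nuc_norm :: "real mat \<Rightarrow> real" where
  "nuc_norm X = sum_list (svals X)"

definition trunc_nuc :: "nat \<Rightarrow> real mat \<Rightarrow> real" where
  "trunc_nuc K X = sum_list (drop K (svals X))"

definition feas_cone :: "nat \<Rightarrow> nat \<Rightarrow> real mat \<Rightarrow> real mat set \<Rightarrow> real mat set" where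
  "feas_cone m n X C = {D \<in> carrier_mat m n. \<exists>t'>0. \<forall>t. 0 < t \<and> t < t' \<longrightarrow> X + t \<cdot>\<^sub>m D \<in> C}"

definition has_dir_deriv :: "(real mat \<Rightarrow> real) \<Rightarrow> real mat \<Rightarrow> real mat \<Rightarrow> real \<Rightarrow> bool" where
  "has_dir_deriv h X D L \<longleftrightarrow> ((\<lambda>t. (h (X + t \<cdot>\<^sub>m D) - h X) / t) \<longlongrightarrow> L) (at_right 0)"

text \<open>h + delta_C directionally differentiable on its domain C.\<close>
definition dir_diff_on :: "nat \<Rightarrow> nat \<Rightarrow> (real mat \<Rightarrow> real) \<Rightarrow> real mat set \<Rightarrow> bool" where
  "dir_diff_on m n h C \<longleftrightarrow> (\<forall>X\<in>C. \<forall>D\<in>feas_cone m n X C. \<exists>L. has_dir_deriv h X D L)"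

definition cond_C1 :: "nat \<Rightarrow> nat \<Rightarrow> nat \<Rightarrow> real mat set \<Rightarrow> bool" where
  "cond_C1 m n K C \<longleftrightarrow> (\<forall>X\<in>C. \<exists>U V. is_svd X U (svals X) V \<and>
      - (U * rect_diag m n (replicate K 0 @ drop K (svals X)) * transpose_mat V)
        \<in> feas_cone m n X C)"

text \<open>Along
  feasible directions delta_C vanishes for small t, so it is omitted from the quotient.\<close>
definition d_stationary :: "nat \<Rightarrow> nat \<Rightarrow> (real mat \<Rightarrow> real) \<Rightarrow> real \<Rightarrow> nat \<Rightarrow> real mat set \<Rightarrow> real mat \<Rightarrow> bool" where
  "d_stationary m n f \<gamma> K C X \<longleftrightarrow> X \<in> C \<and>
     (\<forall>D\<in>feas_cone m n X C. \<exists>L. has_dir_deriv (\<lambda>Y. f Y + \<gamma> * trunc_nuc K Y) X D L \<and> 0 \<le> L)"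

end

theory Submission
  imports Defs "Jordan_Normal_Form.Char_Poly" "HOL-Combinatorics.Permutations"
begin

text \<open>Let \<open>X = U [diag \<sigma>, 0] V\<^sup>T\<close> be an SVD and \<open>G = U [diag (0,\<dots>,0,\<sigma>\<^sub>K\<^sub>+\<^sub>1,\<dots>,\<sigma>\<^sub>m), 0] V\<^sup>T\<close>,
  so that \<open>-G\<close> is feasible by (C1).  Moving from \<open>X\<close> to \<open>X - t G\<close> shrinks the tail singular
  values by the factor \<open>1 - t\<close> without changing their order, so \<open>T\<^sub>K\<close> drops by exactly
  \<open>t T\<^sub>K(X)\<close>, while \<open>\<parallel>t G\<parallel>\<^sub>* = t T\<^sub>K(X)\<close> bounds the increase of \<open>f\<close> by \<open>M t T\<^sub>K(X)\<close>.
  Hence the directional derivative along \<open>-G\<close> is at most \<open>(M - \<gamma>) T\<^sub>K(X)\<close>; d-stationarity makes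
  it nonnegative, which forces \<open>T\<^sub>K(X) = 0\<close> when \<open>\<gamma> > M\<close>.

  Singular values are identified through the characteristic polynomial of the Gram matrix
  \<open>X X\<^sup>T\<close>, whose roots are the squared singular values.\<close>

lemma orth_mat_right_inverse:
  assumes "orth_mat k U"
  shows "U * transpose_mat U = 1\<^sub>m k"
  using assms unfolding orth_mat_def
  by (metis mat_mult_left_right_inverse transpose_carrier_mat)

lemma orth_mat_transpose: "orth_mat k U \<Longrightarrow> orth_mat k (transpose_mat U)"
  using orth_mat_right_inverse by (simp add: orth_mat_def)

lemma orth_mat_mult:
  assumes A: "orth_mat k A" and B: "orth_mat k B"
  shows "orth_mat k (A * B)"
proof -
  have Ac: "A \<in> carrier_mat k k" and Bc: "B \<in> carrier_mat k k"
    using A B by (auto simp: orth_mat_def)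
  have "transpose_mat (A * B) * (A * B) = transpose_mat B * ((transpose_mat A * A) * B)"
    using Ac Bc by (simp add: transpose_mult assoc_mult_mat[of _ k k _ k _ k])
  also have "\<dots> = 1\<^sub>m k"
    using A B Bc by (simp add: orth_mat_def)
  finally show ?thesis
    using Ac Bc by (simp add: orth_mat_def)
qed

lemma mult_smult_mult_mat:
  fixes U B W :: "'a :: comm_ring_1 mat"
  assumes "U \<in> carrier_mat k m" "B \<in> carrier_mat m n" "W \<in> carrier_mat n l"
  shows "U * (c \<cdot>\<^sub>m B) * W = c \<cdot>\<^sub>m (U * B * W)"
  using assms by (simp add: mult_smult_distrib mult_smult_assoc_mat[of _ k n])

lemma mult_minus_mult_mat:
  fixes U A B W :: "'a :: comm_ring_1 mat"
  assumes "U \<in> carrier_mat k m" "A \<in> carrier_mat m n" "B \<in> carrier_mat m n" "W \<in> carrier_mat n l"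
  shows "U * (A - B) * W = U * A * W - U * B * W"
  using assms by (simp add: mult_minus_distrib_mat minus_mult_distrib_mat[of _ k n])

lemma rect_diag_carrier [simp]: "rect_diag m n s \<in> carrier_mat m n"
  unfolding rect_diag_def by simp

lemma rect_diag_dims [simp]: "dim_row (rect_diag m n s) = m" "dim_col (rect_diag m n s) = n"
  unfolding rect_diag_def by simp_all

lemma rect_diag_mult_transpose:
  assumes "length s = m" "m \<le> n"
  shows "rect_diag m n s * transpose_mat (rect_diag m n s) = mat_diag m (\<lambda>i. (s ! i)\<^sup>2)"
proof (rule eq_matI)
  fix i j assume "i < dim_row (mat_diag m (\<lambda>i. (s ! i)\<^sup>2))" "j < dim_col (mat_diag m (\<lambda>i. (s ! i)\<^sup>2))"
  then have ij: "i < m" "j < m" by (auto simp: mat_diag_def)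
  have "(rect_diag m n s * transpose_mat (rect_diag m n s)) $$ (i, j)
      = (\<Sum>k\<in>{0..<n}. (if i = k then s ! i else 0) * (if j = k then s ! j else 0))"
    using ij assms unfolding rect_diag_def by (auto simp: scalar_prod_def intro!: sum.cong)
  also have "\<dots> = (\<Sum>k\<in>{0..<n}. if k = i then (if i = j then (s ! i)\<^sup>2 else 0) else 0)"
    by (intro sum.cong) (auto simp: power2_eq_square)
  finally show "(rect_diag m n s * transpose_mat (rect_diag m n s)) $$ (i, j)
      = mat_diag m (\<lambda>i. (s ! i)\<^sup>2) $$ (i, j)"
    using ij assms by (simp add: mat_diag_def)
qed (auto simp: mat_diag_def)

lemma gram_orth_conj:
  assumes U: "U \<in> carrier_mat m m" and R: "R \<in> carrier_mat m n" and W: "orth_mat n W"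
  shows "(U * R * transpose_mat W) * transpose_mat (U * R * transpose_mat W)
    = U * (R * transpose_mat R) * transpose_mat U"
proof -
  have Wc: "W \<in> carrier_mat n n" and WW: "transpose_mat W * W = 1\<^sub>m n"
    using W by (auto simp: orth_mat_def)
  have UR: "U * R \<in> carrier_mat m n" and RU: "transpose_mat R * transpose_mat U \<in> carrier_mat n m"
    using U R by auto
  have "transpose_mat (U * R * transpose_mat W) = W * (transpose_mat R * transpose_mat U)"
    using transpose_mult[OF UR, of "transpose_mat W" n] transpose_mult[OF U R] Wc by simp
  then have "(U * R * transpose_mat W) * transpose_mat (U * R * transpose_mat W)
      = (U * R) * ((transpose_mat W * W) * (transpose_mat R * transpose_mat U))"
    using UR RU Wc by (simp add: assoc_mult_mat[of _ m n _ n _ m] assoc_mult_mat[of _ n n _ n _ m])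
  also have "\<dots> = U * (R * transpose_mat R) * transpose_mat U"
    using U R RU
    by (simp add: WW assoc_mult_mat[of U m m "R * transpose_mat R" m "transpose_mat U" m]
        assoc_mult_mat[of R m n "transpose_mat R" m "transpose_mat U" m]
        assoc_mult_mat[of U m m R n "transpose_mat R * transpose_mat U" m])
  finally show ?thesis .
qed

lemma char_poly_mat_diag: "char_poly (mat_diag m f) = (\<Prod>i\<leftarrow>[0..<m]. [:- f i, 1:])"
proof -
  have "upper_triangular (mat_diag m f)"
    by (auto simp: mat_diag_def upper_triangular_def)
  then have "char_poly (mat_diag m f) = (\<Prod>i\<leftarrow>[0..<m]. [:- mat_diag m f $$ (i, i), 1:])"
    by (simp add: char_poly_upper_triangular[of _ m] diag_mat_def comp_def carrier_matD[OF mat_diag_dim])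
  also have "\<dots> = (\<Prod>i\<leftarrow>[0..<m]. [:- f i, 1:])"
    by (intro arg_cong[where f = prod_list] map_cong) (auto simp: mat_diag_def)
  finally show ?thesis .
qed

lemma proots_prod_linear_factors: "proots (\<Prod>a\<leftarrow>xs. [:- a, 1:]) = mset (xs :: 'a :: idom list)"
proof (induction xs)
  case (Cons a xs)
  have "proots ([:- a, 1:] * (\<Prod>a\<leftarrow>xs. [:- a, 1:])) = proots [:- a, 1:] + mset xs"
    by (subst proots_mult) (auto simp: prod_list_zero_iff Cons)
  then show ?case
    by simp
qed simp

lemma char_poly_gram_svd:
  assumes U: "orth_mat m U" and V: "orth_mat n V" and s: "length s = m" and mn: "m \<le> n"
  defines "X \<equiv> U * rect_diag m n s * transpose_mat V"
  shows "char_poly (X * transpose_mat X) = (\<Prod>x\<leftarrow>s. [:- x\<^sup>2, 1:])"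
proof -
  let ?D = "mat_diag m (\<lambda>i. (s ! i)\<^sup>2)"
  have Uc: "U \<in> carrier_mat m m" using U by (simp add: orth_mat_def)
  have "X * transpose_mat X = U * ?D * transpose_mat U"
    unfolding X_def using gram_orth_conj[OF Uc rect_diag_carrier V] rect_diag_mult_transpose[OF s mn]
    by simp
  moreover have "similar_mat (U * ?D * transpose_mat U) ?D"
  proof (rule similar_matI[where n = m])
    show "{U * ?D * transpose_mat U, ?D, U, transpose_mat U} \<subseteq> carrier_mat m m"
      using Uc by auto
    show "U * transpose_mat U = 1\<^sub>m m" "transpose_mat U * U = 1\<^sub>m m"
      using U orth_mat_right_inverse by (auto simp: orth_mat_def)
  qed (rule refl)
  ultimately have "char_poly (X * transpose_mat X) = char_poly ?D"
    by (simp add: char_poly_similar)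
  also have "\<dots> = (\<Prod>x\<leftarrow>s. [:- x\<^sup>2, 1:])"
    unfolding char_poly_mat_diag using s by (intro arg_cong[where f = prod_list] nth_equalityI) auto
  finally show ?thesis .
qed

lemma mset_eq_if_squares_eq:
  fixes xs ys :: "real list"
  assumes sq: "mset (map (\<lambda>x. x\<^sup>2) xs) = mset (map (\<lambda>x. x\<^sup>2) ys)"
    and "\<forall>x\<in>set xs. 0 \<le> x" and "\<forall>y\<in>set ys. 0 \<le> y"
  shows "mset xs = mset ys"
proof -
  have sqrt_sq: "mset zs = image_mset sqrt (mset (map (\<lambda>x. x\<^sup>2) zs))" if "\<forall>z\<in>set zs. 0 \<le> z" for zs
  proof -
    have "map abs zs = zs"
      using that by (auto intro: map_idI)
    then show ?thesis
      by (simp add: multiset.map_comp comp_def) (metis mset_map)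
  qed
  show ?thesis
    using sqrt_sq[OF assms(2)] sqrt_sq[OF assms(3)] sq by simp
qed

lemma svd_mset_unique:
  assumes U: "orth_mat m U" and V: "orth_mat n V" and U': "orth_mat m U'" and V': "orth_mat n V'"
    and s: "length s = m" and s': "length s' = m" and mn: "m \<le> n"
    and nn: "\<forall>x\<in>set s. 0 \<le> x" and nn': "\<forall>x\<in>set s'. 0 \<le> x"
    and eq: "U * rect_diag m n s * transpose_mat V = U' * rect_diag m n s' * transpose_mat V'"
  shows "mset s = mset s'"
proof -
  have "(\<Prod>x\<leftarrow>s. [:- x\<^sup>2, 1:]) = (\<Prod>x\<leftarrow>s'. [:- x\<^sup>2, 1:])"
    using char_poly_gram_svd[OF U V s mn] char_poly_gram_svd[OF U' V' s' mn] eq by simp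
  then have "mset (map (\<lambda>x. x\<^sup>2) s) = mset (map (\<lambda>x. x\<^sup>2) s')"
    using proots_prod_linear_factors[of "map (\<lambda>x. x\<^sup>2) s"]
      proots_prod_linear_factors[of "map (\<lambda>x. x\<^sup>2) s'"]
    by (simp add: comp_def)
  then show ?thesis
    using nn nn' by (rule mset_eq_if_squares_eq)
qed

lemma rev_sort_eq_if_sorted_desc:
  assumes "sorted_wrt (\<ge>) xs"
  shows "rev (sort xs) = (xs :: 'a :: linorder list)"
proof -
  have "sort xs = rev xs"
    by (rule properties_for_sort) (use assms in \<open>simp_all add: sorted_wrt_rev\<close>)
  then show ?thesis
    by simp
qed

lemma is_svd_nonneg: "is_svd X U s V \<Longrightarrow> \<forall>x\<in>set s. 0 \<le> x"
  by (auto simp: is_svd_def Let_def in_set_conv_nth)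

lemma is_svdD:
  assumes "is_svd X U s V" "X \<in> carrier_mat m n" "m \<le> n"
  shows "orth_mat m U" "orth_mat n V" "length s = m" "\<forall>x\<in>set s. 0 \<le> x" "sorted_wrt (\<ge>) s"
    "X = U * rect_diag m n s * transpose_mat V"
  using assms is_svd_nonneg[OF assms(1)] by (auto simp: is_svd_def Let_def)

lemma svals_eqI:
  assumes svd: "is_svd X U s V" and mn: "dim_row X \<le> dim_col X"
  shows "svals X = s"
  unfolding svals_def
proof (rule the_equality)
  show "\<exists>U V. is_svd X U s V"
    using svd by blast
  fix s' assume "\<exists>U V. is_svd X U s' V"
  then obtain U' V' where svd': "is_svd X U' s' V'" by blast
  have X: "X \<in> carrier_mat (dim_row X) (dim_col X)"
    by auto
  note d = is_svdD[OF svd X mn] and d' = is_svdD[OF svd' X mn]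
  have "mset s' = mset s"
    using d'(6)[symmetric] d(6)
    by (intro svd_mset_unique[OF d'(1,2) d(1,2) d'(3) d(3) mn d'(4) d(4)]) simp
  then have "sort s' = sort s"
    by (intro properties_for_sort) simp_all
  then show "s' = s"
    using rev_sort_eq_if_sorted_desc[OF d(5)] rev_sort_eq_if_sorted_desc[OF d'(5)] by simp
qed

definition perm_mat :: "nat \<Rightarrow> (nat \<Rightarrow> nat) \<Rightarrow> real mat" where
  "perm_mat k p = mat k k (\<lambda>(i, j). if i = p j then 1 else 0)"

lemma perm_mat_carrier [simp]: "perm_mat k p \<in> carrier_mat k k"
  by (simp add: perm_mat_def)

lemma permutes_lessThan_less:
  fixes p :: "nat \<Rightarrow> nat"
  assumes p: "p permutes {..<m}" and "m \<le> k" "i < k"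
  shows "p i < k"
proof (cases "i < m")
  case True
  then have "p i < m"
    using permutes_in_image[OF p, of i] by simp
  then show ?thesis
    using assms(2) by simp
next
  case False
  then show ?thesis
    using permutes_not_in[OF p, of i] assms(3) by simp
qed

lemma orth_mat_perm_mat:
  assumes p: "p permutes {..<m}" and mk: "m \<le> k"
  shows "orth_mat k (perm_mat k p)"
  unfolding orth_mat_def
proof (intro conjI)
  show "transpose_mat (perm_mat k p) * perm_mat k p = 1\<^sub>m k"
  proof (rule eq_matI)
    fix i j assume "i < dim_row (1\<^sub>m k)" "j < dim_col (1\<^sub>m k)"
    then have ij: "i < k" "j < k" by auto
    have "(transpose_mat (perm_mat k p) * perm_mat k p) $$ (i, j)
        = (\<Sum>a\<in>{0..<k}. (if a = p i then 1 else 0) * (if a = p j then 1 else 0))"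
      using ij by (simp add: perm_mat_def scalar_prod_def)
    also have "\<dots> = (\<Sum>a\<in>{0..<k}. if a = p i then (if p i = p j then 1 else 0) else 0)"
      by (rule sum.cong) auto
    also have "\<dots> = 1\<^sub>m k $$ (i, j)"
      using ij permutes_lessThan_less[OF p mk] permutes_inj[OF p] by (simp add: inj_eq)
    finally show "(transpose_mat (perm_mat k p) * perm_mat k p) $$ (i, j) = 1\<^sub>m k $$ (i, j)" .
  qed (auto simp: perm_mat_def)
qed simp

lemma perm_mat_conj_rect_diag:
  assumes p: "p permutes {..<m}" and s: "length s = m" and mn: "m \<le> n"
  shows "transpose_mat (perm_mat m p) * rect_diag m n s * perm_mat n p = rect_diag m n (permute_list p s)"
proof -
  let ?R = "rect_diag m n s"
  have pm: "p i < m" if "i < m" for i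
    using permutes_lessThan_less[OF p order_refl that] .
  have pn: "p j < n" if "j < n" for j
    using permutes_lessThan_less[OF p mn that] .
  have rows: "transpose_mat (perm_mat m p) * ?R = mat m n (\<lambda>(i, j). ?R $$ (p i, j))"
  proof (rule eq_matI)
    fix i j assume "i < dim_row (mat m n (\<lambda>(i, j). ?R $$ (p i, j)))"
      "j < dim_col (mat m n (\<lambda>(i, j). ?R $$ (p i, j)))"
    then have ij: "i < m" "j < n" by auto
    have "(transpose_mat (perm_mat m p) * ?R) $$ (i, j)
        = (\<Sum>a\<in>{0..<m}. (if a = p i then 1 else 0) * ?R $$ (a, j))"
      using ij by (simp add: perm_mat_def scalar_prod_def)
    also have "\<dots> = (\<Sum>a\<in>{0..<m}. if a = p i then ?R $$ (p i, j) else 0)"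
      by (rule sum.cong) auto
    finally show "(transpose_mat (perm_mat m p) * ?R) $$ (i, j) = mat m n (\<lambda>(i, j). ?R $$ (p i, j)) $$ (i, j)"
      using ij pm by simp
  qed (auto simp: perm_mat_def)
  show ?thesis
    unfolding rows
  proof (rule eq_matI)
    fix i j assume "i < dim_row (rect_diag m n (permute_list p s))"
      "j < dim_col (rect_diag m n (permute_list p s))"
    then have ij: "i < m" "j < n" by auto
    have "(mat m n (\<lambda>(i, j). ?R $$ (p i, j)) * perm_mat n p) $$ (i, j)
        = (\<Sum>b\<in>{0..<n}. ?R $$ (p i, b) * (if b = p j then 1 else 0))"
      using ij by (simp add: perm_mat_def scalar_prod_def)
    also have "\<dots> = (\<Sum>b\<in>{0..<n}. if b = p j then ?R $$ (p i, p j) else 0)"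
      by (rule sum.cong) auto
    also have "\<dots> = rect_diag m n (permute_list p s) $$ (i, j)"
      using ij pm pn s permutes_inj[OF p] permute_list_nth[of p s] p
      by (auto simp: rect_diag_def inj_eq)
    finally show "(mat m n (\<lambda>(i, j). ?R $$ (p i, j)) * perm_mat n p) $$ (i, j)
        = rect_diag m n (permute_list p s) $$ (i, j)" .
  qed (auto simp: perm_mat_def)
qed

text \<open>Conjugation with a permutation matrix sorts the diagonal.\<close>

lemma svals_orth_rect_diag:
  assumes U: "orth_mat m U" and V: "orth_mat n V" and s: "length s = m" and mn: "m \<le> n"
    and nn: "\<forall>x\<in>set s. 0 \<le> x"
  shows "svals (U * rect_diag m n s * transpose_mat V) = rev (sort s)"
proof -
  define s' where "s' = rev (sort s)"
  have "\<forall>x\<in>set s'. 0 \<le> x"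
    using nn by (simp add: s'_def)
  then have s': "length s' = m" "sorted_wrt (\<ge>) s'" "\<forall>i<length s'. 0 \<le> s' ! i"
    using s by (simp add: s'_def, simp add: s'_def sorted_wrt_rev, simp only: all_set_conv_all_nth)
  obtain p where p: "p permutes {..<m}" and ps: "permute_list p s' = s"
    using mset_eq_permutation[of s s'] s'(1) by (auto simp: s'_def)
  define P Q where "P = perm_mat m p" and "Q = perm_mat n p"
  have Uc: "U \<in> carrier_mat m m" and Vc: "V \<in> carrier_mat n n"
    using U V by (auto simp: orth_mat_def)
  have P: "orth_mat m P" and Q: "orth_mat n Q"
    unfolding P_def Q_def using orth_mat_perm_mat p mn by auto
  have Pt: "transpose_mat P \<in> carrier_mat m m" and Qc: "Q \<in> carrier_mat n n"
    unfolding P_def Q_def by auto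
  have PR: "transpose_mat P * rect_diag m n s' \<in> carrier_mat m n"
    using Pt by auto
  have "rect_diag m n s = transpose_mat P * rect_diag m n s' * Q"
    unfolding P_def Q_def perm_mat_conj_rect_diag[OF p s'(1) mn] ps ..
  then have "U * rect_diag m n s * transpose_mat V = (U * (transpose_mat P * rect_diag m n s')) * (Q * transpose_mat V)"
    using Uc Vc Qc PR by (simp add: assoc_mult_mat[of _ m m _ n _ n] assoc_mult_mat[of _ m n _ n _ n])
  also have "\<dots> = (U * transpose_mat P) * rect_diag m n s' * transpose_mat (V * transpose_mat Q)"
    using Uc Vc Pt Qc by (simp add: transpose_mult[of V n n] assoc_mult_mat[of U m m _ m _ n])
  finally have "is_svd (U * rect_diag m n s * transpose_mat V) (U * transpose_mat P) s' (V * transpose_mat Q)"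
    using Uc Vc s' mn orth_mat_mult[OF U orth_mat_transpose[OF P]] orth_mat_mult[OF V orth_mat_transpose[OF Q]]
    by (simp add: is_svd_def)
  then show ?thesis
    using Uc Vc mn by (simp add: svals_eqI s'_def)
qed

lemma nuc_norm_orth_rect_diag:
  assumes "orth_mat m U" "orth_mat n V" "length s = m" "m \<le> n" "\<forall>x\<in>set s. 0 \<le> x"
  shows "nuc_norm (U * rect_diag m n s * transpose_mat V) = sum_list s"
proof -
  have "sum_list (sort s) = sum_mset (mset (sort s))"
    by (rule sum_mset_sum_list[symmetric])
  also have "\<dots> = sum_list s"
    by (simp add: sum_mset_sum_list)
  finally have "sum_list (sort s) = sum_list s" .
  then show ?thesis
    using svals_orth_rect_diag[OF assms] by (simp add: nuc_norm_def sum_list_rev)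
qed

lemma sorted_desc_shrink_tail:
  fixes s :: "real list"
  assumes sorted: "sorted_wrt (\<ge>) s" and nn: "\<forall>x\<in>set s. 0 \<le> x" and t: "0 \<le> t" "t \<le> 1"
  shows "sorted_wrt (\<ge>) (take K s @ map ((*) (1 - t)) (drop K s))"
proof -
  have "sorted_wrt (\<ge>) (take K s @ drop K s)"
    using sorted by simp
  then have head: "sorted_wrt (\<ge>) (take K s)" and tail: "sorted_wrt (\<ge>) (drop K s)"
    and cross: "\<forall>x\<in>set (take K s). \<forall>y\<in>set (drop K s). y \<le> x"
    unfolding sorted_wrt_append by blast+
  have "sorted_wrt (\<lambda>x y. (1 - t) * y \<le> (1 - t) * x) (drop K s)"
    by (rule sorted_wrt_mono_rel[OF _ tail]) (use t in \<open>simp add: mult_left_mono\<close>)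
  moreover have "\<forall>x\<in>set (take K s). \<forall>y\<in>set (drop K s). (1 - t) * y \<le> x"
  proof (intro ballI)
    fix x y assume xy: "x \<in> set (take K s)" "y \<in> set (drop K s)"
    have "0 \<le> y"
      using nn in_set_dropD[OF xy(2)] by blast
    then have "(1 - t) * y \<le> y"
      using t by (simp add: algebra_simps)
    then show "(1 - t) * y \<le> x"
      using cross xy by fastforce
  qed
  ultimately show ?thesis
    using head by (simp add: sorted_wrt_append sorted_wrt_map)
qed

text \<open>Condition (C1) declares \<open>- tail_mat m n K U (svals X) V\<close> feasible at \<open>X\<close>.\<close>

definition tail_mat :: "nat \<Rightarrow> nat \<Rightarrow> nat \<Rightarrow> real mat \<Rightarrow> real list \<Rightarrow> real mat \<Rightarrow> real mat" where
  "tail_mat m n K U s V = U * rect_diag m n (replicate K 0 @ drop K s) * transpose_mat V"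

lemma tail_mat_carrier: "orth_mat m U \<Longrightarrow> orth_mat n V \<Longrightarrow> tail_mat m n K U s V \<in> carrier_mat m n"
  by (auto simp: tail_mat_def orth_mat_def)

lemma nuc_norm_smult_tail_mat:
  assumes U: "orth_mat m U" and V: "orth_mat n V" and s: "length s = m" "\<forall>x\<in>set s. 0 \<le> x"
    and mn: "m \<le> n" and K: "K \<le> m" and t: "0 \<le> t"
  shows "nuc_norm (t \<cdot>\<^sub>m tail_mat m n K U s V) = t * sum_list (drop K s)"
proof -
  let ?z = "replicate K 0 @ drop K s"
  have Uc: "U \<in> carrier_mat m m" and Vt: "transpose_mat V \<in> carrier_mat n n"
    using U V by (auto simp: orth_mat_def)
  have "t \<cdot>\<^sub>m rect_diag m n ?z = rect_diag m n (map ((*) t) ?z)"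
    by (rule eq_matI) (auto simp: rect_diag_def nth_append)
  then have "t \<cdot>\<^sub>m tail_mat m n K U s V = U * rect_diag m n (map ((*) t) ?z) * transpose_mat V"
    unfolding tail_mat_def using mult_smult_mult_mat[OF Uc rect_diag_carrier Vt, symmetric] by simp
  moreover have "\<forall>x\<in>set (map ((*) t) ?z). 0 \<le> x"
    using s(2) t by (auto dest: in_set_dropD)
  ultimately show ?thesis
    using nuc_norm_orth_rect_diag[OF U V _ mn] s(1) K
    by (simp add: sum_list_const_mult sum_list_replicate)
qed

lemma svals_shrink_tail:
  assumes svd: "is_svd X U s V" and X: "X \<in> carrier_mat m n" and mn: "m \<le> n" and K: "K \<le> m"
    and t: "0 \<le> t" "t \<le> 1"
  shows "svals (X - t \<cdot>\<^sub>m tail_mat m n K U s V) = take K s @ map ((*) (1 - t)) (drop K s)"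
proof -
  let ?z = "replicate K 0 @ drop K s" and ?s = "take K s @ map ((*) (1 - t)) (drop K s)"
  note svd = is_svdD[OF svd X mn]
  have Uc: "U \<in> carrier_mat m m" and Vt: "transpose_mat V \<in> carrier_mat n n"
    using svd(1,2) by (auto simp: orth_mat_def)
  have "rect_diag m n s - t \<cdot>\<^sub>m rect_diag m n ?z = rect_diag m n ?s"
    using svd(3) K by (intro eq_matI) (auto simp: rect_diag_def nth_append algebra_simps)
  then have "X - t \<cdot>\<^sub>m tail_mat m n K U s V = U * rect_diag m n ?s * transpose_mat V"
    unfolding tail_mat_def svd(6)
    using mult_smult_mult_mat[OF Uc rect_diag_carrier Vt, symmetric]
      mult_minus_mult_mat[OF Uc rect_diag_carrier smult_carrier_mat[OF rect_diag_carrier] Vt, symmetric]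
    by simp
  moreover have "\<forall>x\<in>set ?s. 0 \<le> x"
    using svd(4) t by (auto dest: in_set_takeD in_set_dropD)
  moreover have "sorted_wrt (\<ge>) ?s"
    using sorted_desc_shrink_tail[OF svd(5,4) t] .
  ultimately show ?thesis
    using svd(1-3) K mn
    by (simp add: svals_orth_rect_diag rev_sort_eq_if_sorted_desc)
qed

lemma trunc_nuc_nonneg: "is_svd X U (svals X) V \<Longrightarrow> 0 \<le> trunc_nuc K X"
  unfolding trunc_nuc_def by (auto dest!: is_svd_nonneg in_set_dropD intro!: sum_list_nonneg)

lemma objective_step_along_tail_le:
  fixes f :: "real mat \<Rightarrow> real"
  assumes lip: "\<forall>X\<in>C. \<forall>Y\<in>C. \<bar>f X - f Y\<bar> \<le> M * nuc_norm (X - Y)"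
    and svd: "is_svd X U (svals X) V" and X: "X \<in> C" "X \<in> carrier_mat m n"
    and mn: "m \<le> n" and K: "K \<le> m" and t: "0 < t" "t \<le> 1"
    and step_in_C: "X + t \<cdot>\<^sub>m (- tail_mat m n K U (svals X) V) \<in> C"
  defines "G \<equiv> tail_mat m n K U (svals X) V"
  shows "(f (X + t \<cdot>\<^sub>m (- G)) + \<gamma> * trunc_nuc K (X + t \<cdot>\<^sub>m (- G))) - (f X + \<gamma> * trunc_nuc K X)
    \<le> t * ((M - \<gamma>) * trunc_nuc K X)"
proof -
  note svd_facts = is_svdD[OF svd X(2) mn]
  let ?Y = "X - t \<cdot>\<^sub>m G"
  have step: "X + t \<cdot>\<^sub>m (- G) = ?Y" "X - ?Y = t \<cdot>\<^sub>m G"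
    using X(2) tail_mat_carrier[OF svd_facts(1,2)] by (auto simp: G_def intro!: eq_matI)
  have "\<bar>f X - f ?Y\<bar> \<le> M * nuc_norm (X - ?Y)"
    using lip X(1) step_in_C[folded G_def] step(1) by simp
  then have f_step: "f ?Y - f X \<le> M * (t * trunc_nuc K X)"
    using nuc_norm_smult_tail_mat[OF svd_facts(1-4) mn K, of t, folded G_def] t
    by (simp add: step(2) trunc_nuc_def abs_le_iff)
  have tail_step: "trunc_nuc K ?Y = (1 - t) * trunc_nuc K X"
    using svals_shrink_tail[OF svd X(2) mn K, of t, folded G_def] t svd_facts(3) K
    by (simp add: trunc_nuc_def sum_list_const_mult)
  have "(f (X + t \<cdot>\<^sub>m (- G)) + \<gamma> * trunc_nuc K (X + t \<cdot>\<^sub>m (- G))) - (f X + \<gamma> * trunc_nuc K X)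
      = (f ?Y - f X) - \<gamma> * (t * trunc_nuc K X)"
    unfolding step(1) tail_step by (simp add: algebra_simps)
  also have "\<dots> \<le> t * ((M - \<gamma>) * trunc_nuc K X)"
    using f_step by (simp add: algebra_simps)
  finally show ?thesis .
qed

lemma has_dir_deriv_le:
  assumes L: "has_dir_deriv h X D L" and \<delta>: "0 < \<delta>"
    and bound: "\<And>t. 0 < t \<Longrightarrow> t < \<delta> \<Longrightarrow> h (X + t \<cdot>\<^sub>m D) - h X \<le> t * c"
  shows "L \<le> c"
proof (rule tendsto_upperbound[OF L[unfolded has_dir_deriv_def]])
  show "\<forall>\<^sub>F t in at_right 0. (h (X + t \<cdot>\<^sub>m D) - h X) / t \<le> c"
    unfolding eventually_at_right_field
    using \<delta> bound by (auto simp: divide_le_eq mult.commute)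
qed simp

theorem mainTheorem16:
  fixes m n K :: nat and \<gamma> M :: real and f :: "real mat \<Rightarrow> real"
    and C :: "real mat set" and Xs :: "real mat"
  assumes "m \<le> n" and "K < m" and "\<gamma> > 0"
    and "C \<subseteq> carrier_mat m n"
    and "cond_C1 m n K C"
    and "dir_diff_on m n f C"
    and "\<forall>X\<in>C. \<forall>Y\<in>C. \<bar>f X - f Y\<bar> \<le> M * nuc_norm (X - Y)"
    and "d_stationary m n f \<gamma> K C Xs"
    and "\<gamma> > M"
  shows "trunc_nuc K Xs = 0"
proof -
  have XsC: "Xs \<in> C" and Xs: "Xs \<in> carrier_mat m n"
    using assms(4,8) by (auto simp: d_stationary_def)
  obtain U V where svd: "is_svd Xs U (svals Xs) V"
    and feasible: "- tail_mat m n K U (svals Xs) V \<in> feas_cone m n Xs C"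
    using assms(5) XsC by (auto simp: cond_C1_def tail_mat_def)
  obtain L where L: "has_dir_deriv (\<lambda>Y. f Y + \<gamma> * trunc_nuc K Y) Xs (- tail_mat m n K U (svals Xs) V) L"
    and "0 \<le> L"
    using assms(8) feasible by (auto simp: d_stationary_def)
  obtain \<delta> where "0 < \<delta>"
    and step_in_C: "\<And>t. 0 < t \<Longrightarrow> t < \<delta> \<Longrightarrow> Xs + t \<cdot>\<^sub>m (- tail_mat m n K U (svals Xs) V) \<in> C"
    using feasible unfolding feas_cone_def by blast
  have "L \<le> (M - \<gamma>) * trunc_nuc K Xs"
    using has_dir_deriv_le[OF L, of "min \<delta> 1"] \<open>0 < \<delta>\<close> step_in_C
      objective_step_along_tail_le[OF assms(7) svd XsC Xs assms(1) less_imp_le[OF assms(2)]]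
    by simp
  with \<open>0 \<le> L\<close> have "0 \<le> (M - \<gamma>) * trunc_nuc K Xs"
    by linarith
  with \<open>\<gamma> > M\<close> have "trunc_nuc K Xs \<le> 0"
    by (auto simp: zero_le_mult_iff)
  then show ?thesis
    using trunc_nuc_nonneg[OF svd, of K] by simp
qed

end
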